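(* Fix $m\ge1$ and $1\le s\le 3$, and put $k=4-s$. Let $f\in\mathbb{F}_q[x_1,\dots,x_k]$ and $G\in\mathbb{F}_q[x_1,x_2,x_3]$. Assume that for every monomial $x^\alpha=x_1^{\alpha_1}\cdots x_k^{\alpha_k}$ of $f$ and every monomial $x^\gamma=x_1^{\gamma_1}x_2^{\gamma_2}x_3^{\gamma_3}$ of $G$ there exists $t\in\{1,\dots,k\}$ with $\alpha_t+\gamma_t\ge q^m-1$ (when $k<3$, $\gamma$ is restricted to its first $k$ coordinates). Let $L_k=\det(x_i^{q^{j-1}})_{1\le i,j\le k}$ be the Moore determinant in $x_1,\dots,x_k$. Then $$\big(V_4^{\,q-1}G\big)\,f\,L_k\in I_m(4)=(x_1^{q^m},x_2^{q^m},x_3^{q^m},x_4^{q^m}),$$ so this product is zero in $\mathcal{Q}_m(4)=\mathbb{F}_q[x_1,\dots,x_4]/I_m(4)$.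
   Context: $q=p^r$, $p$ prime. $V_4=L_4/L_3$ is the upper triangular (Mui) invariant in $x_1,\dots,x_4$, where $L_n$ is the $n\times n$ Moore determinant $\det(x_j^{q^{i}})_{0\le i\le n-1,1\le j\le n}$; equivalently $V_4=\prod(x_4+a x_1+b x_2+c x_3)$ over $(a,b,c)\in\mathbb{F}_q^3$. *)

theory Defs
  imports Main "HOL-Library.Poly_Mapping" "HOL-Combinatorics.Permutations"
begin

text \<open>Multivariate polynomials over a commutative ring 'a in variables x_1, x_2, ...
  (indexed by nat), represented as finitely supported maps from exponent vectors
  (nat =>0 nat) to coefficients.  The monomials of P are the exponent vectors in keys P.\<close>

type_synonym 'a mpoly = "(nat \<Rightarrow>\<^sub>0 nat) \<Rightarrow>\<^sub>0 'a"

definition Var :: "nat \<Rightarrow> 'a::comm_ring_1 mpoly" where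
  "Var i = Poly_Mapping.single (Poly_Mapping.single i 1) 1"

definition Const :: "'a::comm_ring_1 \<Rightarrow> 'a mpoly" where
  "Const c = Poly_Mapping.single 0 c"

definition vars_in :: "nat set \<Rightarrow> 'a::comm_ring_1 mpoly \<Rightarrow> bool" where
  "vars_in S P \<longleftrightarrow> (\<forall>\<alpha>\<in>Poly_Mapping.keys P. Poly_Mapping.keys \<alpha> \<subseteq> S)"

definition moore_det :: "nat \<Rightarrow> nat \<Rightarrow> 'a::comm_ring_1 mpoly" where
  "moore_det q k = (\<Sum>p | p permutes {1..k}.
      of_int (sign p) * (\<Prod>i\<in>{1..k}. Var i ^ (q ^ (p i - 1))))"

definition V4 :: "'a::{comm_ring_1,finite} mpoly" where
  "V4 = (\<Prod>(a,b,c)\<in>(UNIV :: ('a \<times> 'a \<times> 'a) set).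
      Var 4 + Const a * Var 1 + Const b * Var 2 + Const c * Var 3)"

definition in_Im4 :: "nat \<Rightarrow> nat \<Rightarrow> 'a::comm_ring_1 mpoly \<Rightarrow> bool" where
  "in_Im4 q m P \<longleftrightarrow> (\<exists>h. P = (\<Sum>i\<in>{1..4}. h i * Var i ^ (q ^ m)))"

end

theory Submission
  imports Defs
begin

text \<open>Every permutation term of the Leibniz expansion of the Moore determinant L_k contains
  each x_t (t \<le> k) with exponent a power of q, hence at least 1.  So multiplying by L_k raises
  every exponent of x_1, ..., x_k, and the hypothesis \<open>\<alpha>\<^sub>t + \<gamma>\<^sub>t \<ge> q^m - 1\<close> turns into
  \<open>\<ge> q^m\<close> for every monomial of G f L_k.  A polynomial all of whose monomials are divisible
  by some x_t^(q^m) lies in I_m(4), and so do all its multiples.\<close>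

lemma Var_power: "(Var t :: 'a::comm_ring_1 mpoly) ^ n = Poly_Mapping.single (Poly_Mapping.single t n) 1"
  by (induction n) (auto simp: Var_def mult_single single_add[symmetric] add.commute)

lemma prod_single_one:
  "(\<Prod>i\<in>I. Poly_Mapping.single (g i) (1::'b::comm_semiring_1)) = Poly_Mapping.single (\<Sum>i\<in>I. g i) 1"
  by (induction I rule: infinite_finite_induct) (simp_all add: mult_single)

lemma poly_mapping_sum_single_keys:
  "P = (\<Sum>\<beta>\<in>Poly_Mapping.keys P. Poly_Mapping.single \<beta> (Poly_Mapping.lookup P \<beta>))"
  by (rule poly_mapping_eqI) (auto simp: lookup_sum lookup_single when_def in_keys_iff)

lemma moore_det_monomials:
  "moore_det q k = (\<Sum>p | p permutes {1..k}.
     Poly_Mapping.single (\<Sum>i\<in>{1..k}. Poly_Mapping.single i (q ^ (p i - 1))) (of_int (sign p)))"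
  unfolding moore_det_def
  by (simp add: Var_power prod_single_one mult_single flip: single_of_int)

lemma lookup_keys_moore_det_pos:
  assumes "0 < q" "t \<in> {1..k}" "d \<in> Poly_Mapping.keys (moore_det q k :: 'a::comm_ring_1 mpoly)"
  shows "0 < Poly_Mapping.lookup d t"
proof -
  obtain p where "d = (\<Sum>i\<in>{1..k}. Poly_Mapping.single i (q ^ (p i - 1)))"
    using assms(3) keys_sum unfolding moore_det_monomials by (fastforce split: if_splits)
  then have "Poly_Mapping.lookup d t = q ^ (p t - 1)"
    using assms(2) by (simp add: lookup_sum lookup_single when_def)
  then show ?thesis
    using assms(1) by simp
qed

definition in_monomial_ideal :: "nat set \<Rightarrow> nat \<Rightarrow> 'a::comm_ring_1 mpoly \<Rightarrow> bool" where
  "in_monomial_ideal T N P \<longleftrightarrow> (\<forall>\<beta>\<in>Poly_Mapping.keys P. \<exists>t\<in>T. N \<le> Poly_Mapping.lookup \<beta> t)"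

lemma in_monomial_ideal_mono:
  "T \<subseteq> T' \<Longrightarrow> in_monomial_ideal T N P \<Longrightarrow> in_monomial_ideal T' N P"
  unfolding in_monomial_ideal_def by blast

lemma in_monomial_ideal_mult_left:
  assumes "in_monomial_ideal T N P"
  shows "in_monomial_ideal T N (Q * P)"
  unfolding in_monomial_ideal_def
proof
  fix \<beta> assume "\<beta> \<in> Poly_Mapping.keys (Q * P)"
  then obtain a b where \<beta>: "\<beta> = a + b" "b \<in> Poly_Mapping.keys P"
    using keys_mult by blast
  then obtain t where "t \<in> T" "N \<le> Poly_Mapping.lookup b t"
    using assms unfolding in_monomial_ideal_def by blast
  then show "\<exists>t\<in>T. N \<le> Poly_Mapping.lookup \<beta> t"
    by (auto simp: \<beta>(1) lookup_add intro!: bexI[of _ t])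
qed

lemma mult_moore_det_in_monomial_ideal:
  fixes P :: "'a::comm_ring_1 mpoly"
  assumes "0 < q"
    and "\<forall>\<beta>\<in>Poly_Mapping.keys P. \<exists>t\<in>{1..k}. N - 1 \<le> Poly_Mapping.lookup \<beta> t"
  shows "in_monomial_ideal {1..k} N (P * moore_det q k)"
  unfolding in_monomial_ideal_def
proof
  fix \<beta> assume "\<beta> \<in> Poly_Mapping.keys (P * moore_det q k)"
  then obtain a d where \<beta>: "\<beta> = a + d" "a \<in> Poly_Mapping.keys P"
    "d \<in> Poly_Mapping.keys (moore_det q k :: 'a mpoly)"
    using keys_mult by blast
  then obtain t where t: "t \<in> {1..k}" "N - 1 \<le> Poly_Mapping.lookup a t"
    using assms(2) by blast
  have "0 < Poly_Mapping.lookup d t"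
    using lookup_keys_moore_det_pos[OF assms(1) t(1) \<beta>(3)] .
  with t show "\<exists>t\<in>{1..k}. N \<le> Poly_Mapping.lookup \<beta> t"
    by (auto simp: \<beta>(1) lookup_add intro!: bexI[of _ t])
qed

lemma in_Im4_add: "in_Im4 q m P \<Longrightarrow> in_Im4 q m Q \<Longrightarrow> in_Im4 q m (P + Q)"
  unfolding in_Im4_def
proof (elim exE)
  fix h g
  assume "P = (\<Sum>i\<in>{1..4}. h i * Var i ^ q ^ m)" "Q = (\<Sum>i\<in>{1..4}. g i * Var i ^ q ^ m)"
  then have "P + Q = (\<Sum>i\<in>{1..4}. (h i + g i) * Var i ^ q ^ m)"
    by (simp add: sum.distrib distrib_right)
  then show "\<exists>h. P + Q = (\<Sum>i\<in>{1..4}. h i * Var i ^ q ^ m)"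
    by (intro exI[where x = "\<lambda>i. h i + g i"])
qed

lemma in_Im4_sum: "(\<And>x. x \<in> A \<Longrightarrow> in_Im4 q m (F x)) \<Longrightarrow> in_Im4 q m (sum F A)"
proof (induction A rule: infinite_finite_induct)
  case (insert x A)
  then show ?case by (auto intro: in_Im4_add)
qed (auto simp: in_Im4_def intro!: exI[of _ "\<lambda>_. 0"])

lemma in_Im4_single:
  assumes "t \<in> {1..4}" "q ^ m \<le> Poly_Mapping.lookup \<beta> t"
  shows "in_Im4 q m (Poly_Mapping.single \<beta> c :: 'a::comm_ring_1 mpoly)"
proof -
  define \<delta> where "\<delta> = \<beta> - Poly_Mapping.single t (q ^ m)"
  have "\<beta> = \<delta> + Poly_Mapping.single t (q ^ m)"
    using assms(2) unfolding \<delta>_def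
    by (intro poly_mapping_eqI) (auto simp: lookup_add lookup_minus lookup_single when_def)
  then have "Poly_Mapping.single \<beta> c = Poly_Mapping.single \<delta> c * Var t ^ q ^ m"
    by (simp add: Var_power mult_single)
  also have "\<dots> = (\<Sum>i\<in>{1..4}. (if i = t then Poly_Mapping.single \<delta> c else 0) * Var i ^ q ^ m)"
    using assms(1) by (simp add: if_distrib[of "\<lambda>y. y * _"] cong: if_cong)
  finally show ?thesis
    unfolding in_Im4_def by (intro exI[where x = "\<lambda>i. if i = t then Poly_Mapping.single \<delta> c else 0"])
qed

lemma in_Im4_if_in_monomial_ideal:
  assumes "in_monomial_ideal {1..4} (q ^ m) P"
  shows "in_Im4 q m P"
proof (subst poly_mapping_sum_single_keys, rule in_Im4_sum)
  fix \<beta> assume "\<beta> \<in> Poly_Mapping.keys P"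
  then obtain t where "t \<in> {1..4}" "q ^ m \<le> Poly_Mapping.lookup \<beta> t"
    using assms unfolding in_monomial_ideal_def by blast
  then show "in_Im4 q m (Poly_Mapping.single \<beta> (Poly_Mapping.lookup P \<beta>))"
    by (rule in_Im4_single)
qed

theorem lemma4p2:
  fixes f G :: "'a::{field,finite} mpoly" and m s k q :: nat
  assumes "q = card (UNIV :: 'a set)"
    and "m \<ge> 1" and "1 \<le> s" and "s \<le> 3" and "k = 4 - s"
    and "vars_in {1..k} f" and "vars_in {1..3} G"
    and "\<forall>\<alpha>\<in>Poly_Mapping.keys f. \<forall>\<gamma>\<in>Poly_Mapping.keys G. \<exists>t\<in>{1..k}.
           Poly_Mapping.lookup \<alpha> t + Poly_Mapping.lookup \<gamma> t \<ge> q ^ m - 1"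
  shows "in_Im4 q m ((V4 ^ (q - 1) * G) * f * moore_det q k)"
proof -
  have "0 < q"
    using assms(1) by (simp add: finite_UNIV_card_ge_0)
  have "\<forall>\<beta>\<in>Poly_Mapping.keys (G * f). \<exists>t\<in>{1..k}. q ^ m - 1 \<le> Poly_Mapping.lookup \<beta> t"
  proof
    fix \<beta> assume "\<beta> \<in> Poly_Mapping.keys (G * f)"
    then obtain \<gamma> \<alpha> where \<beta>: "\<beta> = \<gamma> + \<alpha>" "\<gamma> \<in> Poly_Mapping.keys G" "\<alpha> \<in> Poly_Mapping.keys f"
      using keys_mult by blast
    then obtain t where "t \<in> {1..k}" "q ^ m - 1 \<le> Poly_Mapping.lookup \<alpha> t + Poly_Mapping.lookup \<gamma> t"
      using assms(8) by blast
    then show "\<exists>t\<in>{1..k}. q ^ m - 1 \<le> Poly_Mapping.lookup \<beta> t"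
      by (auto simp: \<beta>(1) lookup_add intro!: bexI[of _ t])
  qed
  then have "in_monomial_ideal {1..k} (q ^ m) (G * f * moore_det q k)"
    using \<open>0 < q\<close> by (intro mult_moore_det_in_monomial_ideal)
  moreover have "{1..k} \<subseteq> {1..4}"
    using assms(5) by auto
  ultimately have "in_monomial_ideal {1..4} (q ^ m) (G * f * moore_det q k)"
    by (rule in_monomial_ideal_mono[rotated])
  then have "in_monomial_ideal {1..4} (q ^ m) (V4 ^ (q - 1) * (G * f * moore_det q k))"
    by (rule in_monomial_ideal_mult_left)
  then show ?thesis
    by (simp add: in_Im4_if_in_monomial_ideal mult.assoc)
qed

end
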